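(* Let $k$ and $d$ be two positive integers. Let $f$ be any $n$-variable Boolean function such that ${AI}(f)=k$. Let $\delta$ be any $n$-variable Boolean function such that $w_H(\delta)<\min(2^{n-k},2^{d+1}-1)$. Then $|{AI}(f+\delta)-{AI}(f)|\le d$.
   Context: An $n$-variable Boolean function is a map $\mathbb{F}_2^n\to\mathbb{F}_2$, with algebraic degree the degree of its algebraic normal form; $w_H(\delta)$ is the Hamming weight (number of $x$ with $\delta(x)=1$). ${LDA}(h)$ is the minimum algebraic degree of a nonzero $g$ with $h\cdot g=0$, and the algebraic immunity is ${AI}(f)=\min({LDA}(f),{LDA}(1+f))$. *)

theory Defs
  imports Main "HOL-Library.Extended_Nat"
begin

text \<open>An n-variable Boolean function is modelled as a predicate on finite sets of
  indices: a point x of F_2^n is identified with its support, a subset of {..<n}.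
  Values outside the domain Pow {..<n} are irrelevant in all definitions below.\<close>

definition bpoints :: "nat \<Rightarrow> nat set set" where
  "bpoints n = Pow {..<n}"

definition anf_coeff :: "(nat set \<Rightarrow> bool) \<Rightarrow> nat set \<Rightarrow> bool" where
  "anf_coeff f u = odd (card {x. x \<subseteq> u \<and> f x})"

definition alg_deg :: "nat \<Rightarrow> (nat set \<Rightarrow> bool) \<Rightarrow> nat" where
  "alg_deg n f = Max ({card u | u. u \<subseteq> {..<n} \<and> anf_coeff f u} \<union> {0})"

definition bf_nonzero :: "nat \<Rightarrow> (nat set \<Rightarrow> bool) \<Rightarrow> bool" where
  "bf_nonzero n g \<longleftrightarrow> (\<exists>x\<in>bpoints n. g x)"

definition annihilates :: "nat \<Rightarrow> (nat set \<Rightarrow> bool) \<Rightarrow> (nat set \<Rightarrow> bool) \<Rightarrow> bool" where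
  "annihilates n g h \<longleftrightarrow> (\<forall>x\<in>bpoints n. \<not> (h x \<and> g x))"

text \<open>LDA(h): minimum degree of a nonzero annihilator (infinity if none exists).\<close>
definition LDA :: "nat \<Rightarrow> (nat set \<Rightarrow> bool) \<Rightarrow> enat" where
  "LDA n h = Inf {enat (alg_deg n g) | g. bf_nonzero n g \<and> annihilates n g h}"

definition bf_add :: "(nat set \<Rightarrow> bool) \<Rightarrow> (nat set \<Rightarrow> bool) \<Rightarrow> nat set \<Rightarrow> bool" where
  "bf_add f g = (\<lambda>x. f x \<noteq> g x)"

definition bf_one :: "nat set \<Rightarrow> bool" where
  "bf_one = (\<lambda>x. True)"

definition AI :: "nat \<Rightarrow> (nat set \<Rightarrow> bool) \<Rightarrow> enat" where
  "AI n f = min (LDA n f) (LDA n (bf_add bf_one f))"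

definition hweight :: "nat \<Rightarrow> (nat set \<Rightarrow> bool) \<Rightarrow> nat" where
  "hweight n d = card {x \<in> bpoints n. d x}"

end

theory Submission
  imports Defs
begin

text \<open>Let g be an annihilator of f (or of 1 + f) of minimal degree k. A nonzero function of
  degree at most k has weight at least 2^(n-k) (the minimum distance of the Reed-Muller code),
  so g is nonzero at some point x outside the support of \<delta>. The at most 2^(d+1) - 1 points
  of supp \<delta> \<union> {x} can be interpolated by functions of degree at most d; multiplying g by
  one that is 1 at x and 0 on supp \<delta> gives a nonzero annihilator of f + \<delta> of degree at most
  k + d. So AI(f + \<delta>) \<le> AI(f) + d, and since (f + \<delta>) + \<delta> = f and the weight hypothesis
  only gets weaker as the immunity decreases, also AI(f) \<le> AI(f + \<delta>) + d.\<close>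

text \<open>Degree at most e, witnessed by writing g as the parity of a combination of monomials of
  degree at most e (the monomial x^u is 1 at x iff u \<subseteq> x) with coefficients in nat rather
  than F_2, so that products of representations represent the product.\<close>
definition bf_deg_le :: "nat \<Rightarrow> (nat set \<Rightarrow> bool) \<Rightarrow> nat \<Rightarrow> bool" where
  "bf_deg_le n g e \<longleftrightarrow> (\<exists>c::nat set \<Rightarrow> nat. (\<forall>u. c u \<noteq> 0 \<longrightarrow> card u \<le> e) \<and>
     (\<forall>x\<in>bpoints n. g x = odd (\<Sum>u\<in>Pow x. c u)))"

lemma bf_deg_leI:
  fixes c :: "nat set \<Rightarrow> nat"
  assumes "\<And>u. c u \<noteq> 0 \<Longrightarrow> card u \<le> e" "\<And>x. x \<in> bpoints n \<Longrightarrow> g x = odd (\<Sum>u\<in>Pow x. c u)"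
  shows "bf_deg_le n g e"
  using assms unfolding bf_deg_le_def by blast

lemma finite_of_bpoints: "x \<in> bpoints n \<Longrightarrow> finite x"
  unfolding bpoints_def by (auto intro: finite_subset)

lemma finite_bpoints: "finite (bpoints n)"
  by (simp add: bpoints_def)

lemma card_bpoints: "card (bpoints n) = 2 ^ n"
  by (simp add: bpoints_def card_Pow)

lemma bpoints_Suc: "bpoints (Suc n) = bpoints n \<union> insert n ` bpoints n"
  unfolding bpoints_def lessThan_Suc by (rule Pow_insert)

lemma Diff_last_in_bpoints: "x \<in> bpoints (Suc n) \<Longrightarrow> x - {n} \<in> bpoints n"
  by (auto simp: bpoints_def less_Suc_eq)

lemma inj_on_insert_bpoints: "inj_on (insert n) (bpoints n)"
  by (rule inj_onI) (auto simp: bpoints_def insert_ident)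

lemma odd_card_odd_iff_odd_sum:
  assumes "finite A"
  shows "odd (card {u\<in>A. odd (N u)}) \<longleftrightarrow> odd (\<Sum>u\<in>A. N u :: nat)"
  using assms
proof (induction A rule: finite_induct)
  case (insert a A)
  have "{u\<in>insert a A. odd (N u)} =
      (if odd (N a) then insert a {u\<in>A. odd (N u)} else {u\<in>A. odd (N u)})"
    by auto
  with insert show ?case by (auto simp: card_insert_if)
qed simp

lemma card_supersets_in_Pow:
  assumes "finite x" "y \<subseteq> x"
  shows "card {u\<in>Pow x. y \<subseteq> u} = 2 ^ card (x - y)"
proof -
  have "bij_betw (\<lambda>w. w \<union> y) (Pow (x - y)) {u\<in>Pow x. y \<subseteq> u}"
    by (rule bij_betw_byWitness[where f' = "\<lambda>u. u - y"]) (use assms in auto)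
  then show ?thesis
    using assms by (simp add: bij_betw_same_card[symmetric] card_Pow)
qed

text \<open>Moebius inversion mod 2: the subset-sum transform is an involution over F_2.\<close>
lemma odd_sum_Pow_sum_Pow_iff:
  assumes "finite x"
  shows "odd (\<Sum>u\<in>Pow x. \<Sum>y\<in>Pow u. c y :: nat) \<longleftrightarrow> odd (c x)"
proof -
  have "(\<Sum>u\<in>Pow x. \<Sum>y\<in>Pow u. c y) = (\<Sum>u\<in>Pow x. \<Sum>y\<in>{y\<in>Pow x. y \<subseteq> u}. c y)"
    by (intro sum.cong) auto
  also have "\<dots> = (\<Sum>y\<in>Pow x. \<Sum>u\<in>{u\<in>Pow x. y \<subseteq> u}. c y)"
    using assms by (intro sum.swap_restrict) auto
  also have "\<dots> = (\<Sum>y\<in>Pow x. c y * 2 ^ card (x - y))"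
    using card_supersets_in_Pow[OF assms] by (intro sum.cong refl) simp
  also have "\<dots> = c x + (\<Sum>y\<in>Pow x - {x}. c y * 2 ^ card (x - y))"
    using assms by (subst sum.remove[of _ x]) auto
  finally have sum_eq: "(\<Sum>u\<in>Pow x. \<Sum>y\<in>Pow u. c y) =
      c x + (\<Sum>y\<in>Pow x - {x}. c y * 2 ^ card (x - y))" .
  have "even (\<Sum>y\<in>Pow x - {x}. c y * 2 ^ card (x - y))"
  proof (rule dvd_sum)
    fix y assume "y \<in> Pow x - {x}"
    then have "card (x - y) \<noteq> 0" using assms by auto
    then show "even (c y * 2 ^ card (x - y))" by simp
  qed
  then show ?thesis unfolding sum_eq by simp
qed

lemma anf_coeff_eq_odd_sum:
  assumes "finite u"
  shows "anf_coeff g u \<longleftrightarrow> odd (\<Sum>y\<in>Pow u. of_bool (g y) :: nat)"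
proof -
  have "Pow u \<inter> {y. g y} = {y. y \<subseteq> u \<and> g y}" by auto
  then show ?thesis using assms by (simp add: anf_coeff_def)
qed

lemma alg_deg_le_iff:
  "alg_deg n g \<le> e \<longleftrightarrow> (\<forall>u. u \<subseteq> {..<n} \<and> anf_coeff g u \<longrightarrow> card u \<le> e)"
proof -
  have "{card u | u. u \<subseteq> {..<n} \<and> anf_coeff g u} \<subseteq> card ` Pow {..<n}" by auto
  then have "finite {card u | u. u \<subseteq> {..<n} \<and> anf_coeff g u}"
    by (rule finite_subset) simp
  then show ?thesis unfolding alg_deg_def by (subst Max_le_iff) auto
qed

lemma bf_deg_le_imp_alg_deg_le:
  assumes "bf_deg_le n g e"
  shows "alg_deg n g \<le> e"
proof -
  obtain c :: "nat set \<Rightarrow> nat" where c_deg: "\<forall>u. c u \<noteq> 0 \<longrightarrow> card u \<le> e"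
    and c_rep: "\<forall>x\<in>bpoints n. g x = odd (\<Sum>u\<in>Pow x. c u)"
    using assms unfolding bf_deg_le_def by blast
  show ?thesis unfolding alg_deg_le_iff
  proof (intro allI impI)
    fix v assume v: "v \<subseteq> {..<n} \<and> anf_coeff g v"
    then have "finite v" by (blast intro: finite_subset)
    have "{x. x \<subseteq> v \<and> g x} = {x\<in>Pow v. odd (\<Sum>u\<in>Pow x. c u)}"
      using v c_rep unfolding bpoints_def by auto
    with v have "odd (card {x\<in>Pow v. odd (\<Sum>u\<in>Pow x. c u)})"
      unfolding anf_coeff_def by simp
    then have "odd (c v)"
      using odd_card_odd_iff_odd_sum[of "Pow v"] odd_sum_Pow_sum_Pow_iff[of v c] \<open>finite v\<close>
      by simp
    then show "card v \<le> e" using c_deg by (metis even_zero)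
  qed
qed

lemma alg_deg_le_imp_bf_deg_le:
  assumes "alg_deg n g \<le> e"
  shows "bf_deg_le n g e"
proof -
  define c :: "nat set \<Rightarrow> nat" where "c u = of_bool (u \<subseteq> {..<n} \<and> anf_coeff g u)" for u
  have "g x = odd (\<Sum>u\<in>Pow x. c u)" if x: "x \<in> bpoints n" for x
  proof -
    have "finite x" using x by (rule finite_of_bpoints)
    have "(\<Sum>u\<in>Pow x. c u) = (\<Sum>u\<in>Pow x. of_bool (odd (\<Sum>y\<in>Pow u. of_bool (g y) :: nat)))"
      using x finite_subset[OF _ \<open>finite x\<close>]
      by (intro sum.cong) (auto simp: c_def bpoints_def anf_coeff_eq_odd_sum)
    also have "\<dots> = card {u\<in>Pow x. odd (\<Sum>y\<in>Pow u. of_bool (g y) :: nat)}"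
      using \<open>finite x\<close> by (subst sum_of_bool_eq) (auto intro!: arg_cong[where f = card])
    finally show ?thesis
      using odd_card_odd_iff_odd_sum[of "Pow x"] odd_sum_Pow_sum_Pow_iff[of x "\<lambda>y. of_bool (g y)"]
        \<open>finite x\<close> by simp
  qed
  moreover have "\<forall>u. c u \<noteq> 0 \<longrightarrow> card u \<le> e"
    using assms unfolding alg_deg_le_iff c_def by auto
  ultimately show ?thesis unfolding bf_deg_le_def by blast
qed

lemma bf_deg_le_const: "bf_deg_le n (\<lambda>_. b) e"
proof (rule bf_deg_leI[of "\<lambda>u. if u = {} then of_bool b else 0"])
  fix x assume "x \<in> bpoints n"
  then have "finite x" by (rule finite_of_bpoints)
  then show "b = odd (\<Sum>u\<in>Pow x. if u = {} then of_bool b else 0)"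
    by (simp add: sum.delta)
qed (simp split: if_splits)

lemma bf_deg_le_var: "bf_deg_le n (\<lambda>x. i \<in> x) 1"
proof (rule bf_deg_leI[of "\<lambda>u. if u = {i} then 1 else 0"])
  fix x assume "x \<in> bpoints n"
  then have "finite x" by (rule finite_of_bpoints)
  then show "(i \<in> x) = odd (\<Sum>u\<in>Pow x. if u = {i} then 1 else 0 :: nat)"
    by (simp add: sum.delta)
qed (simp split: if_splits)

lemma bf_deg_le_xor:
  assumes "bf_deg_le n g e" "bf_deg_le n h e"
  shows "bf_deg_le n (\<lambda>x. g x \<noteq> h x) e"
proof -
  obtain c :: "nat set \<Rightarrow> nat" where c_deg: "\<forall>u. c u \<noteq> 0 \<longrightarrow> card u \<le> e"
    and c_rep: "\<forall>x\<in>bpoints n. g x = odd (\<Sum>u\<in>Pow x. c u)"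
    using assms(1) unfolding bf_deg_le_def by blast
  obtain c' :: "nat set \<Rightarrow> nat" where c'_deg: "\<forall>u. c' u \<noteq> 0 \<longrightarrow> card u \<le> e"
    and c'_rep: "\<forall>x\<in>bpoints n. h x = odd (\<Sum>u\<in>Pow x. c' u)"
    using assms(2) unfolding bf_deg_le_def by blast
  show ?thesis
  proof (rule bf_deg_leI[of "\<lambda>u. c u + c' u"])
    fix u assume "c u + c' u \<noteq> 0"
    then show "card u \<le> e" using c_deg c'_deg by auto
  next
    fix x assume "x \<in> bpoints n"
    then show "(g x \<noteq> h x) = odd (\<Sum>u\<in>Pow x. c u + c' u)"
      using c_rep c'_rep by (simp add: sum.distrib)
  qed
qed

lemma bf_deg_le_literal: "bf_deg_le n (\<lambda>x. (i \<in> x) = b) 1"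
  using bf_deg_le_xor[OF bf_deg_le_var bf_deg_le_const, of n i "\<not> b"] by simp

text \<open>The coefficient of a monomial w in the product collects all pairs of monomials whose
  union is w, since x^u x^v = x^(u \<union> v) over F_2.\<close>
lemma bf_deg_le_conj:
  assumes "bf_deg_le n g e" "bf_deg_le n h e'"
  shows "bf_deg_le n (\<lambda>x. g x \<and> h x) (e + e')"
proof -
  obtain c :: "nat set \<Rightarrow> nat" where c_deg: "\<forall>u. c u \<noteq> 0 \<longrightarrow> card u \<le> e"
    and c_rep: "\<forall>x\<in>bpoints n. g x = odd (\<Sum>u\<in>Pow x. c u)"
    using assms(1) unfolding bf_deg_le_def by blast
  obtain c' :: "nat set \<Rightarrow> nat" where c'_deg: "\<forall>u. c' u \<noteq> 0 \<longrightarrow> card u \<le> e'"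
    and c'_rep: "\<forall>x\<in>bpoints n. h x = odd (\<Sum>u\<in>Pow x. c' u)"
    using assms(2) unfolding bf_deg_le_def by blast
  define pairs where "pairs w = {p\<in>Pow w \<times> Pow w. fst p \<union> snd p = w}" for w :: "nat set"
  define C where "C w = (\<Sum>p\<in>pairs w. c (fst p) * c' (snd p))" for w
  show ?thesis
  proof (rule bf_deg_leI[of C])
    fix w assume "C w \<noteq> 0"
    then obtain p where p: "p \<in> pairs w" "c (fst p) * c' (snd p) \<noteq> 0"
      unfolding C_def by (meson sum.not_neutral_contains_not_neutral)
    then have "card w \<le> card (fst p) + card (snd p)"
      using card_Un_le[of "fst p" "snd p"] by (auto simp: pairs_def)
    also have "\<dots> \<le> e + e'" using p(2) c_deg c'_deg by (simp add: add_mono)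
    finally show "card w \<le> e + e'" .
  next
    fix x assume x: "x \<in> bpoints n"
    have "(\<Sum>u\<in>Pow x. c u) * (\<Sum>u\<in>Pow x. c' u) =
        (\<Sum>p\<in>Pow x \<times> Pow x. c (fst p) * c' (snd p))"
      by (simp add: sum_product sum.cartesian_product case_prod_beta)
    also have "\<dots> = (\<Sum>w\<in>Pow x. \<Sum>p\<in>{p\<in>Pow x \<times> Pow x. fst p \<union> snd p = w}. c (fst p) * c' (snd p))"
      using finite_of_bpoints[OF x] by (intro sum.group[symmetric]) auto
    also have "\<dots> = (\<Sum>w\<in>Pow x. C w)"
      unfolding C_def pairs_def by (intro sum.cong refl arg_cong2[where f = sum]) auto
    finally have product: "(\<Sum>u\<in>Pow x. c u) * (\<Sum>u\<in>Pow x. c' u) = (\<Sum>w\<in>Pow x. C w)" .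
    show "(g x \<and> h x) = odd (\<Sum>w\<in>Pow x. C w)"
      using c_rep c'_rep x by (simp add: product[symmetric])
  qed
qed

lemma sum_Pow_insert:
  assumes "finite x" "n \<notin> x"
  shows "(\<Sum>u\<in>Pow (insert n x). c u) = (\<Sum>u\<in>Pow x. c u) + (\<Sum>u\<in>Pow x. c (insert n u))"
proof -
  have "inj_on (insert n) (Pow x)"
    using assms(2) by (intro inj_onI) (auto simp: insert_ident)
  then have "(\<Sum>u\<in>insert n ` Pow x. c u) = (\<Sum>u\<in>Pow x. c (insert n u))"
    by (rule sum.reindex_cong) simp_all
  moreover have "(\<Sum>u\<in>Pow (insert n x). c u) = (\<Sum>u\<in>Pow x. c u) + (\<Sum>u\<in>insert n ` Pow x. c u)"
    unfolding Pow_insert using assms by (intro sum.union_disjoint) auto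
  ultimately show ?thesis by simp
qed

lemma bf_deg_le_extend:
  assumes "bf_deg_le n g e"
  shows "bf_deg_le (Suc n) (\<lambda>x. g (x - {n})) e"
proof -
  obtain c :: "nat set \<Rightarrow> nat" where c_deg: "\<forall>u. c u \<noteq> 0 \<longrightarrow> card u \<le> e"
    and c_rep: "\<forall>x\<in>bpoints n. g x = odd (\<Sum>u\<in>Pow x. c u)"
    using assms unfolding bf_deg_le_def by blast
  show ?thesis
  proof (rule bf_deg_leI[of "\<lambda>u. if n \<in> u then 0 else c u"])
    fix u assume "(if n \<in> u then 0 else c u) \<noteq> 0"
    then show "card u \<le> e" using c_deg by (auto split: if_splits)
  next
    fix x assume x: "x \<in> bpoints (Suc n)"
    then have "g (x - {n}) = odd (\<Sum>u\<in>Pow (x - {n}). c u)"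
      using c_rep Diff_last_in_bpoints by blast
    also have "(\<Sum>u\<in>Pow (x - {n}). c u) = (\<Sum>u\<in>Pow (x - {n}). if n \<in> u then 0 else c u)"
      by (intro sum.cong) auto
    also have "\<dots> = (\<Sum>u\<in>Pow x. if n \<in> u then 0 else c u)"
      using finite_of_bpoints[OF x] by (intro sum.mono_neutral_left) auto
    finally show "g (x - {n}) = odd (\<Sum>u\<in>Pow x. if n \<in> u then 0 else c u)" .
  qed
qed

lemma bf_deg_le_restrict: "bf_deg_le (Suc n) g e \<Longrightarrow> bf_deg_le n g e"
  unfolding bf_deg_le_def bpoints_Suc by blast

lemma bf_deg_le_cofactor:
  assumes "bf_deg_le (Suc n) g e"
  shows "bf_deg_le n (\<lambda>x. g (insert n x)) e"
proof -
  obtain c :: "nat set \<Rightarrow> nat" where c_deg: "\<forall>u. c u \<noteq> 0 \<longrightarrow> card u \<le> e"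
    and c_rep: "\<forall>x\<in>bpoints (Suc n). g x = odd (\<Sum>u\<in>Pow x. c u)"
    using assms unfolding bf_deg_le_def by blast
  show ?thesis
  proof (rule bf_deg_leI[of "\<lambda>u. c u + (if n \<in> u then 0 else c (insert n u))"])
    fix u assume "c u + (if n \<in> u then 0 else c (insert n u)) \<noteq> 0"
    then consider "c u \<noteq> 0" | "c (insert n u) \<noteq> 0"
      by (auto split: if_splits)
    then show "card u \<le> e"
      using c_deg card_insert_le[of u n] by cases (auto intro: order_trans)
  next
    fix x assume x: "x \<in> bpoints n"
    then have "n \<notin> x" "insert n x \<in> bpoints (Suc n)" by (auto simp: bpoints_def)
    moreover have "(\<Sum>u\<in>Pow x. if n \<in> u then 0 else c (insert n u)) = (\<Sum>u\<in>Pow x. c (insert n u))"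
      using \<open>n \<notin> x\<close> by (intro sum.cong) auto
    ultimately show "g (insert n x) = odd (\<Sum>u\<in>Pow x. c u + (if n \<in> u then 0 else c (insert n u)))"
      using c_rep sum_Pow_insert[OF finite_of_bpoints[OF x], of n c] by (simp add: sum.distrib)
  qed
qed

lemma bf_deg_le_derivative:
  assumes "bf_deg_le (Suc n) g (Suc e)"
  shows "bf_deg_le n (\<lambda>x. g x \<noteq> g (insert n x)) e"
proof -
  obtain c :: "nat set \<Rightarrow> nat" where c_deg: "\<forall>u. c u \<noteq> 0 \<longrightarrow> card u \<le> Suc e"
    and c_rep: "\<forall>x\<in>bpoints (Suc n). g x = odd (\<Sum>u\<in>Pow x. c u)"
    using assms unfolding bf_deg_le_def by blast
  show ?thesis
  proof (rule bf_deg_leI[of "\<lambda>u. if n \<in> u then 0 else c (insert n u)"])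
    fix u assume "(if n \<in> u then 0 else c (insert n u)) \<noteq> 0"
    then have "card (insert n u) \<le> Suc e" "n \<notin> u" using c_deg by (auto split: if_splits)
    then show "card u \<le> e" by (cases "finite u") auto
  next
    fix x assume x: "x \<in> bpoints n"
    then have "n \<notin> x" "x \<in> bpoints (Suc n)" "insert n x \<in> bpoints (Suc n)"
      by (auto simp: bpoints_def)
    then have "g x = odd (\<Sum>u\<in>Pow x. c u)"
      and "g (insert n x) = (odd (\<Sum>u\<in>Pow x. c u) \<noteq> odd (\<Sum>u\<in>Pow x. c (insert n u)))"
      using c_rep sum_Pow_insert[OF finite_of_bpoints[OF x], of n c] by auto
    moreover have "(\<Sum>u\<in>Pow x. if n \<in> u then 0 else c (insert n u)) = (\<Sum>u\<in>Pow x. c (insert n u))"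
      using \<open>n \<notin> x\<close> by (intro sum.cong) auto
    ultimately show "(g x \<noteq> g (insert n x)) = odd (\<Sum>u\<in>Pow x. if n \<in> u then 0 else c (insert n u))"
      by auto
  qed
qed

lemma bf_deg_le_0_const:
  assumes "bf_deg_le n g 0" "x \<in> bpoints n" "y \<in> bpoints n"
  shows "g x = g y"
proof -
  obtain c :: "nat set \<Rightarrow> nat" where c_deg: "\<forall>u. c u \<noteq> 0 \<longrightarrow> card u \<le> 0"
    and c_rep: "\<forall>x\<in>bpoints n. g x = odd (\<Sum>u\<in>Pow x. c u)"
    using assms(1) unfolding bf_deg_le_def by blast
  have "g z = odd (c {})" if z: "z \<in> bpoints n" for z
  proof -
    have "c u = 0" if "u \<in> Pow z - {{}}" for u
    proof -
      have "finite u" "u \<noteq> {}"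
        using that finite_subset[OF _ finite_of_bpoints[OF z]] by auto
      then have "\<not> card u \<le> 0" by simp
      then show ?thesis using c_deg by blast
    qed
    then have "(\<Sum>u\<in>Pow z. c u) = c {}"
      using finite_of_bpoints[OF z] by (subst sum.mono_neutral_right[of _ "{{}}"]) auto
    then show ?thesis using c_rep z by simp
  qed
  then show ?thesis using assms(2,3) by simp
qed

lemma bf_deg_le_shannon:
  assumes "bf_deg_le n h1 (Suc d)" "bf_deg_le n h2 d"
  shows "bf_deg_le (Suc n) (\<lambda>x. h1 (x - {n}) \<noteq> ((n \<in> x) = b \<and> h2 (x - {n}))) (Suc d)"
proof -
  have "bf_deg_le (Suc n) (\<lambda>x. (n \<in> x) = b \<and> h2 (x - {n})) (1 + d)"
    by (rule bf_deg_le_conj[OF bf_deg_le_literal bf_deg_le_extend[OF assms(2)]])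
  then have "bf_deg_le (Suc n) (\<lambda>x. (n \<in> x) = b \<and> h2 (x - {n})) (Suc d)"
    by simp
  from bf_deg_le_xor[OF bf_deg_le_extend[OF assms(1)] this] show ?thesis .
qed

lemma hweight_pos: "\<exists>x\<in>bpoints n. g x \<Longrightarrow> 0 < hweight n g"
  unfolding hweight_def using finite_bpoints by (auto simp: card_gt_0_iff)

lemma hweight_Suc: "hweight (Suc n) g = hweight n g + hweight n (\<lambda>x. g (insert n x))"
proof -
  have "{x\<in>bpoints (Suc n). g x} = {x\<in>bpoints n. g x} \<union> insert n ` {x\<in>bpoints n. g (insert n x)}"
    unfolding bpoints_Suc by auto
  moreover have "card (insert n ` {x\<in>bpoints n. g (insert n x)}) = card {x\<in>bpoints n. g (insert n x)}"
    by (rule card_image) (auto intro: inj_on_subset[OF inj_on_insert_bpoints])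
  moreover have "{x\<in>bpoints n. g x} \<inter> insert n ` {x\<in>bpoints n. g (insert n x)} = {}"
    by (auto simp: bpoints_def)
  ultimately show ?thesis
    unfolding hweight_def using finite_bpoints by (simp add: card_Un_disjoint)
qed

lemma hweight_xor_le: "hweight n (\<lambda>x. g x \<noteq> h x) \<le> hweight n g + hweight n h"
proof -
  have "{x\<in>bpoints n. g x \<noteq> h x} \<subseteq> {x\<in>bpoints n. g x} \<union> {x\<in>bpoints n. h x}" by auto
  then have "hweight n (\<lambda>x. g x \<noteq> h x) \<le> card ({x\<in>bpoints n. g x} \<union> {x\<in>bpoints n. h x})"
    unfolding hweight_def using finite_bpoints by (intro card_mono) auto
  also have "\<dots> \<le> hweight n g + hweight n h"
    unfolding hweight_def by (rule card_Un_le)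
  finally show ?thesis .
qed

text \<open>The minimum distance of the Reed-Muller code of order e, by induction on the number of
  variables: if g vanishes on neither half of the cube, both halves contribute; otherwise its
  derivative in the last variable, of degree one less, has no larger weight.\<close>
lemma bf_deg_le_hweight_bound:
  assumes "bf_deg_le n g e" "\<exists>x\<in>bpoints n. g x"
  shows "2 ^ n \<le> 2 ^ e * hweight n g"
  using assms
proof (induction n arbitrary: g e)
  case 0
  then show ?case using hweight_pos[of 0 g] by (simp add: Suc_le_eq)
next
  case (Suc n)
  let ?g1 = "\<lambda>x. g (insert n x)"
  have weight: "hweight (Suc n) g = hweight n g + hweight n ?g1"
    by (rule hweight_Suc)
  have halves: "(\<exists>x\<in>bpoints n. g x) \<or> (\<exists>x\<in>bpoints n. ?g1 x)"
    using Suc.prems(2) unfolding bpoints_Suc by blast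
  show ?case
  proof (cases "(\<exists>x\<in>bpoints n. g x) \<and> (\<exists>x\<in>bpoints n. ?g1 x)")
    case True
    then have "2 ^ n \<le> 2 ^ e * hweight n g" "2 ^ n \<le> 2 ^ e * hweight n ?g1"
      using Suc.IH bf_deg_le_restrict[OF Suc.prems(1)] bf_deg_le_cofactor[OF Suc.prems(1)]
      by blast+
    then show ?thesis unfolding weight by (simp add: algebra_simps)
  next
    case False
    obtain e' where e': "e = Suc e'"
    proof (cases e)
      case 0
      have "g x = g (insert n x)" if "x \<in> bpoints n" for x
        using bf_deg_le_0_const[of "Suc n" g] Suc.prems(1) 0 that unfolding bpoints_Suc by blast
      then show ?thesis using False halves by blast
    qed
    let ?D = "\<lambda>x. g x \<noteq> g (insert n x)"
    have "bf_deg_le n ?D e'"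
      using bf_deg_le_derivative Suc.prems(1) e' by blast
    moreover have "\<exists>x\<in>bpoints n. ?D x"
      using False halves by blast
    ultimately have "2 ^ n \<le> 2 ^ e' * hweight n ?D"
      by (rule Suc.IH)
    also have "\<dots> \<le> 2 ^ e' * hweight (Suc n) g"
      unfolding weight by (intro mult_left_mono hweight_xor_le) simp
    finally show ?thesis using e' by simp
  qed
qed

lemma bf_deg_le_hweight_ge:
  assumes "bf_deg_le n g e" "\<exists>x\<in>bpoints n. g x"
  shows "2 ^ (n - e) \<le> hweight n g"
proof (cases "e \<le> n")
  case True
  then have "2 ^ e * 2 ^ (n - e) \<le> 2 ^ e * hweight n g"
    using bf_deg_le_hweight_bound[OF assms] by (simp flip: power_add)
  then show ?thesis by simp
next
  case False
  then show ?thesis using hweight_pos[OF assms(2)] by simp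
qed

lemma bf_deg_le_interpolation_card_le_1:
  assumes "finite T" "card T \<le> 1"
  shows "\<exists>h. bf_deg_le n h d \<and> (\<forall>y\<in>T. h y = v y)"
proof (cases "T = {}")
  case True
  then show ?thesis using bf_deg_le_const by blast
next
  case False
  then obtain t where "t \<in> T" by blast
  with assms have "\<forall>y\<in>T. y = t"
    using card_le_Suc0_iff_eq[of T] by simp
  then show ?thesis using bf_deg_le_const[of n "v t" d] by auto
qed

text \<open>Split T by the last coordinate. Since card T < 2^(d+1), one half has fewer than 2^d
  points: interpolate on the other half with degree d, then correct on the small half with a
  term of degree d - 1 times the literal selecting it.\<close>
lemma bf_deg_le_interpolation:
  assumes "T \<subseteq> bpoints n" "card T < 2 ^ Suc d"
  shows "\<exists>h. bf_deg_le n h d \<and> (\<forall>y\<in>T. h y = v y)"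
  using assms
proof (induction n arbitrary: d T v)
  case 0
  then have "card T \<le> card (bpoints 0)"
    using finite_bpoints by (intro card_mono)
  then show ?case
    using 0 finite_subset[OF _ finite_bpoints] card_bpoints[of 0]
    by (intro bf_deg_le_interpolation_card_le_1) auto
next
  case (Suc n)
  have "finite T" using Suc.prems(1) finite_subset[OF _ finite_bpoints] by blast
  show ?case
  proof (cases d)
    case 0
    then show ?thesis
      using Suc.prems(2) \<open>finite T\<close> by (intro bf_deg_le_interpolation_card_le_1) auto
  next
    case (Suc d')
    define half where "half b = {y\<in>T. (n \<in> y) = b}" for b
    define proj where "proj b = (\<lambda>y. y - {n}) ` half b" for b
    define lift where "lift b y = (if b then insert n y else y)" for b y
    have finite_half: "finite (half b)" for b
      using \<open>finite T\<close> by (simp add: half_def)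
    have card_proj: "card (proj b) \<le> card (half b)" for b
      unfolding proj_def using finite_half by (rule card_image_le)
    have card_half: "card (half b) \<le> card T" for b
      using \<open>finite T\<close> by (intro card_mono) (auto simp: half_def)
    have "T = half True \<union> half False" "half True \<inter> half False = {}"
      by (auto simp: half_def)
    then have "card (half True) + card (half False) < 2 * 2 ^ d"
      using Suc.prems(2) finite_half by (simp add: card_Un_disjoint[symmetric])
    then have "card (half True) < 2 ^ d \<or> card (half False) < 2 ^ d"
      by linarith
    then obtain b where small: "card (half b) < 2 ^ d" by blast
    have proj_sub: "proj b \<subseteq> bpoints n" for b
      using Suc.prems(1) Diff_last_in_bpoints unfolding proj_def half_def by blast
    have lift_proj: "y - {n} \<in> proj (n \<in> y)" "lift (n \<in> y) (y - {n}) = y" if "y \<in> T" for y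
      using that unfolding proj_def half_def lift_def by auto
    have "card (proj (\<not> b)) < 2 ^ Suc d"
      using card_proj card_half Suc.prems(2) by (meson le_less_trans order_trans)
    then have "\<exists>h. bf_deg_le n h d \<and> (\<forall>y\<in>proj (\<not> b). h y = v (lift (\<not> b) y))"
      by (rule Suc.IH[OF proj_sub])
    then obtain h1 where h1: "bf_deg_le n h1 d" "\<forall>y\<in>proj (\<not> b). h1 y = v (lift (\<not> b) y)"
      by blast
    have "card (proj b) < 2 ^ Suc d'"
      using card_proj small \<open>d = Suc d'\<close> by (meson le_less_trans)
    then have "\<exists>h. bf_deg_le n h d' \<and> (\<forall>y\<in>proj b. h y = (h1 y \<noteq> v (lift b y)))"
      by (rule Suc.IH[OF proj_sub])
    then obtain h2 where h2: "bf_deg_le n h2 d'" "\<forall>y\<in>proj b. h2 y = (h1 y \<noteq> v (lift b y))"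
      by blast
    let ?h = "\<lambda>x. h1 (x - {n}) \<noteq> ((n \<in> x) = b \<and> h2 (x - {n}))"
    have "bf_deg_le (Suc n) ?h d"
      using bf_deg_le_shannon h1(1) h2(1) \<open>d = Suc d'\<close> by blast
    moreover have "?h y = v y" if "y \<in> T" for y
      using lift_proj[OF that] h1(2) h2(2) by (cases "(n \<in> y) = b") auto
    ultimately show ?thesis by blast
  qed
qed

lemma hweight_less_imp_ex_diff:
  assumes "hweight n h < hweight n g"
  shows "\<exists>x\<in>bpoints n. g x \<and> \<not> h x"
proof (rule ccontr)
  assume "\<not> ?thesis"
  then have "{x\<in>bpoints n. g x} \<subseteq> {x\<in>bpoints n. h x}" by blast
  then have "hweight n g \<le> hweight n h"
    unfolding hweight_def using finite_bpoints by (intro card_mono) auto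
  with assms show False by simp
qed

lemma annihilates_conj_add:
  assumes "annihilates n g h" "\<forall>x\<in>bpoints n. s x \<longrightarrow> \<not> \<delta> x"
  shows "annihilates n (\<lambda>x. g x \<and> s x) (bf_add h \<delta>)"
  using assms unfolding annihilates_def bf_add_def by blast

lemma LDA_le: "bf_nonzero n g \<Longrightarrow> annihilates n g h \<Longrightarrow> LDA n h \<le> enat (alg_deg n g)"
  unfolding LDA_def by (rule Inf_lower) blast

lemma LDA_attained:
  assumes "LDA n h = enat k"
  obtains g where "bf_nonzero n g" "annihilates n g h" "alg_deg n g = k"
proof -
  let ?A = "{enat (alg_deg n g) | g. bf_nonzero n g \<and> annihilates n g h}"
  have "?A \<noteq> {}"
  proof
    assume empty: "?A = {}"
    have "LDA n h = \<infinity>"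
      unfolding LDA_def empty by (simp add: top_enat_def)
    with assms show False by simp
  qed
  then have "Inf ?A \<in> ?A"
    unfolding Inf_enat_def by (auto intro: LeastI)
  then show ?thesis
    using assms that unfolding LDA_def by auto
qed

lemma LDA_add_le:
  assumes "LDA n h = enat k"
    and "hweight n \<delta> < 2 ^ (n - k)" and "hweight n \<delta> + 1 < 2 ^ Suc d"
  shows "LDA n (bf_add h \<delta>) \<le> enat (k + d)"
proof -
  obtain g where g: "bf_nonzero n g" "annihilates n g h" "alg_deg n g = k"
    using assms(1) by (rule LDA_attained)
  have deg_g: "bf_deg_le n g k"
    using g(3) by (simp add: alg_deg_le_imp_bf_deg_le)
  have "2 ^ (n - k) \<le> hweight n g"
    using bf_deg_le_hweight_ge[OF deg_g] g(1) unfolding bf_nonzero_def by blast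
  then have "hweight n \<delta> < hweight n g"
    using assms(2) by simp
  then obtain x where x: "x \<in> bpoints n" "g x" "\<not> \<delta> x"
    using hweight_less_imp_ex_diff by blast
  define T where "T = insert x {y\<in>bpoints n. \<delta> y}"
  have "card T \<le> hweight n \<delta> + 1"
    unfolding T_def hweight_def using finite_bpoints by (simp add: card_insert_if)
  then have "card T < 2 ^ Suc d"
    using assms(3) by simp
  moreover have "T \<subseteq> bpoints n"
    using x(1) by (auto simp: T_def)
  ultimately obtain s where s: "bf_deg_le n s d" "\<forall>y\<in>T. s y = (y = x)"
    using bf_deg_le_interpolation[where v = "\<lambda>y. y = x"] by blast
  let ?G = "\<lambda>y. g y \<and> s y"
  have "\<forall>y\<in>bpoints n. s y \<longrightarrow> \<not> \<delta> y"
    using s(2) x(3) unfolding T_def by auto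
  with g(2) have "annihilates n ?G (bf_add h \<delta>)"
    by (rule annihilates_conj_add)
  moreover have "bf_nonzero n ?G"
    using x s(2) unfolding bf_nonzero_def T_def by auto
  ultimately have "LDA n (bf_add h \<delta>) \<le> enat (alg_deg n ?G)"
    by (intro LDA_le)
  also have "\<dots> \<le> enat (k + d)"
    using bf_deg_le_imp_alg_deg_le[OF bf_deg_le_conj[OF deg_g s(1)]] by simp
  finally show ?thesis .
qed

lemma AI_add_le:
  assumes "AI n f = enat k"
    and "hweight n \<delta> < 2 ^ (n - k)" and "hweight n \<delta> + 1 < 2 ^ Suc d"
  shows "AI n (bf_add f \<delta>) \<le> enat (k + d)"
proof -
  consider "LDA n f = enat k" | "LDA n (bf_add bf_one f) = enat k"
    using assms(1) unfolding AI_def by (cases "LDA n f \<le> LDA n (bf_add bf_one f)") (simp_all add: min_def)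
  then show ?thesis
  proof cases
    case 1
    then have "LDA n (bf_add f \<delta>) \<le> enat (k + d)"
      using assms(2,3) by (rule LDA_add_le)
    then show ?thesis unfolding AI_def by (rule min.coboundedI1)
  next
    case 2
    then have "LDA n (bf_add (bf_add bf_one f) \<delta>) \<le> enat (k + d)"
      using assms(2,3) by (rule LDA_add_le)
    moreover have "bf_add (bf_add bf_one f) \<delta> = bf_add bf_one (bf_add f \<delta>)"
      unfolding bf_add_def bf_one_def by auto
    ultimately have "LDA n (bf_add bf_one (bf_add f \<delta>)) \<le> enat (k + d)" by simp
    then show ?thesis unfolding AI_def by (rule min.coboundedI2)
  qed
qed

lemma AI_neq_infinity: "AI n f \<noteq> \<infinity>"
proof (cases "\<exists>x\<in>bpoints n. \<not> f x")
  case True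
  then have "LDA n f \<le> enat (alg_deg n (\<lambda>x. \<not> f x))"
    by (intro LDA_le) (auto simp: bf_nonzero_def annihilates_def)
  then have "AI n f \<le> enat (alg_deg n (\<lambda>x. \<not> f x))"
    unfolding AI_def by (rule min.coboundedI1)
  then show ?thesis by (auto dest: enat_ile)
next
  case False
  moreover have "{} \<in> bpoints n" by (simp add: bpoints_def)
  ultimately have "LDA n (bf_add bf_one f) \<le> enat (alg_deg n bf_one)"
    by (intro LDA_le) (auto simp: bf_nonzero_def annihilates_def bf_one_def bf_add_def)
  then have "AI n f \<le> enat (alg_deg n bf_one)"
    unfolding AI_def by (rule min.coboundedI2)
  then show ?thesis by (auto dest: enat_ile)
qed

theorem proposition12:
  fixes n k d :: nat and f \<delta> :: "nat set \<Rightarrow> bool"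
  assumes "k > 0" and "d > 0"
    and "AI n f = enat k"
    and "hweight n \<delta> < min (2 ^ (n - k)) (2 ^ (d + 1) - 1)"
  shows "\<exists>k'. AI n (bf_add f \<delta>) = enat k' \<and> \<bar>int k' - int k\<bar> \<le> int d"
proof -
  obtain k' where k': "AI n (bf_add f \<delta>) = enat k'"
    using AI_neq_infinity by (meson not_infinity_eq)
  have small_k: "hweight n \<delta> < 2 ^ (n - k)" and small_d: "hweight n \<delta> + 1 < 2 ^ Suc d"
    using assms(4) by auto
  have "k' \<le> k + d"
    using AI_add_le[OF assms(3) small_k small_d] k' by simp
  moreover have "k \<le> k' + d"
  proof (cases "k \<le> k'")
    case False
    then have "(2::nat) ^ (n - k) \<le> 2 ^ (n - k')"
      by (intro power_increasing) auto
    then have small_k': "hweight n \<delta> < 2 ^ (n - k')"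
      using small_k by linarith
    have cancel: "bf_add (bf_add f \<delta>) \<delta> = f"
      unfolding bf_add_def by auto
    have "AI n f \<le> enat (k' + d)"
      using AI_add_le[OF k' small_k' small_d] unfolding cancel .
    then show ?thesis using assms(3) by simp
  qed simp
  ultimately show ?thesis
    using k' by auto
qed

end
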